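(* Let $S(z)$ be a Rosenbrock system matrix and $\lambda\in\mathbb{C}$ with $S(\lambda)$ invertible. Then $$\eta^{\mathbb{S}}(\lambda,A,B)=(\mu_{\mathcal{S}}(M))^{-1},\qquad M=S(\lambda)^{-1}\begin{bmatrix}I_r&I_r\\0_{n,r}&0_{n,r}\end{bmatrix},$$ where $\mathcal{S}=\{\operatorname{diag}(\Delta_1,\Delta_2) : \Delta_1\in\mathbb{C}^{r,r},\ \Delta_2\in\mathbb{C}^{r,n}\}$.
   Context: A Rosenbrock system matrix is $S(z)=\begin{bmatrix}A-zI_r & B\\ C & P(z)\end{bmatrix}$ with $A\in\mathbb{C}^{r,r}$, $B\in\mathbb{C}^{r,n}$, $C\in\mathbb{C}^{n,r}$, $P(z)=\sum_{k=0}^d z^kA_k$, $A_k\in\mathbb{C}^{n,n}$. $\|\cdot\|$ is the spectral norm. The backward error with perturbation of blocks $A$ and $B$ only is $\eta^{\mathbb{S}}(\lambda,A,B):=\inf\{\max\{\|\Delta_A\|,\|\Delta_B\|\} : \Delta_A\in\mathbb{C}^{r,r},\Delta_B\in\mathbb{C}^{r,n},\ \det(S(\lambda)-\begin{bmatrix}\Delta_A&\Delta_B\\0&0\end{bmatrix})=0\}$. Structured $\mu$-value: for $M\in\mathbb{C}^{k,p}$ and $\mathcal{S}\subseteq\mathbb{C}^{p,k}$, $\mu_{\mathcal{S}}(M):=\big(\inf\{\|\Delta\| : \Delta\in\mathcal{S},\ \det(I_p-\Delta M)=0\}\big)^{-1}$, with $\mu_{\mathcal S}(M)=0$ if no such $\Delta$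 exists; $\operatorname{diag}$ of rectangular blocks is the block-diagonal matrix with those blocks. *)

theory Defs
  imports "HOL-Analysis.Analysis"
begin

text \<open>Spectral norm of a (possibly rectangular) complex matrix: the operator norm
  induced by the Euclidean norms (vec norms are the 2-norms).\<close>
definition specnorm :: "complex^'c^'r \<Rightarrow> real" where
  "specnorm M = onorm (\<lambda>x. M *v x)"

definition matpoly :: "nat \<Rightarrow> (nat \<Rightarrow> complex^'n^'n) \<Rightarrow> complex \<Rightarrow> complex^'n^'n" where
  "matpoly d Ak z = (\<chi> i j. \<Sum>k=0..d. z ^ k * (Ak k $ i $ j))"

text \<open>Rosenbrock system matrix S(z) = [A - zI, B; C, P(z)], indexed by 'r + 'n.\<close>
definition rosenbrock ::
  "complex^'r^'r \<Rightarrow> complex^'n^'r \<Rightarrow> complex^'r^'n \<Rightarrow> nat \<Rightarrow> (nat \<Rightarrow> complex^'n^'n)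
    \<Rightarrow> complex \<Rightarrow> complex^('r + 'n)^('r + 'n)" where
  "rosenbrock A B C d Ak z = (\<chi> i j. case i of
      Inl a \<Rightarrow> (case j of Inl b \<Rightarrow> A $ a $ b - (if a = b then z else 0) | Inr b \<Rightarrow> B $ a $ b)
    | Inr a \<Rightarrow> (case j of Inl b \<Rightarrow> C $ a $ b | Inr b \<Rightarrow> matpoly d Ak z $ a $ b))"

definition pertAB :: "complex^'r^'r \<Rightarrow> complex^'n^'r \<Rightarrow> complex^('r + 'n)^('r + 'n)" where
  "pertAB DA DB = (\<chi> i j. case i of
      Inl a \<Rightarrow> (case j of Inl b \<Rightarrow> DA $ a $ b | Inr b \<Rightarrow> DB $ a $ b)
    | Inr a \<Rightarrow> 0)"

definition eta_AB ::
  "complex^'r^'r \<Rightarrow> complex^'n^'r \<Rightarrow> complex^'r^'n \<Rightarrow> nat \<Rightarrow> (nat \<Rightarrow> complex^'n^'n)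
    \<Rightarrow> complex \<Rightarrow> real" where
  "eta_AB A B C d Ak lam = Inf {max (specnorm DA) (specnorm DB) | DA DB.
      det (rosenbrock A B C d Ak lam - pertAB DA DB) = 0}"

definition mu_struct :: "(complex^'k^'p) set \<Rightarrow> complex^'p^'k \<Rightarrow> real" where
  "mu_struct SS M = (if {D \<in> SS. det (mat 1 - D ** M) = 0} = {} then 0
     else inverse (Inf {specnorm D | D. D \<in> SS \<and> det (mat 1 - D ** M) = 0}))"

definition blockdiag :: "complex^'r^'r \<Rightarrow> complex^'n^'r \<Rightarrow> complex^('r + 'n)^('r + 'r)" where
  "blockdiag D1 D2 = (\<chi> i j. case i of
      Inl a \<Rightarrow> (case j of Inl b \<Rightarrow> D1 $ a $ b | Inr b \<Rightarrow> 0)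
    | Inr a \<Rightarrow> (case j of Inl b \<Rightarrow> 0 | Inr b \<Rightarrow> D2 $ a $ b))"

definition IIblock :: "complex^('r::finite + 'r)^('r + 'n::finite)" where
  "IIblock = (\<chi> i j. case i of
      Inl a \<Rightarrow> (case j of Inl b \<Rightarrow> (if a = b then 1 else 0) | Inr b \<Rightarrow> (if a = b then 1 else 0))
    | Inr a \<Rightarrow> 0)"

end

theory Submission imports Defs begin

text \<open>The perturbation factors as IIblock ** diag(\<Delta>A, \<Delta>B). For invertible S, a kernel vector y of
  S - J D yields the kernel vector D y of I - D S^{-1} J and, conversely, x gives S^{-1} J x,
  so both singularity conditions select the same perturbations. The squared
  Euclidean norm splits over the two blocks, so the spectral norm of diag(\<Delta>A, \<Delta>B) is the
  maximum of the norms of the blocks: the two infima range over the same set of reals. That set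
  is nonempty, because choosing \<Delta>A, \<Delta>B as the first block row of S(\<lambda>) makes the perturbed
  matrix singular; hence \<mu> is not given by its degenerate value 0.\<close>

lemma matrix_inv_right:
  fixes S :: "'a::semiring_1^'n^'m"
  assumes "invertible S"
  shows "S ** matrix_inv S = mat 1"
  using someI_ex[OF assms[unfolded invertible_def]] unfolding matrix_inv_def by blast

lemma matrix_inv_left:
  fixes S :: "'a::semiring_1^'n^'m"
  assumes "invertible S"
  shows "matrix_inv S ** S = mat 1"
  using someI_ex[OF assms[unfolded invertible_def]] unfolding matrix_inv_def by blast

lemma det_eq_0_iff_nontrivial_kernel:
  fixes N :: "'a::field^'k^'k"
  shows "det N = 0 \<longleftrightarrow> (\<exists>y. y \<noteq> 0 \<and> N *v y = 0)"
  by (metis invertible_det_nz invertible_left_inverse matrix_left_invertible_ker)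

lemma det_minus_mult_eq_0_iff:
  fixes S :: "'a::field^'k^'k" and J :: "'a^'p^'k" and D :: "'a^'k^'p"
  assumes "invertible S"
  shows "det (S - J ** D) = 0 \<longleftrightarrow> det (mat 1 - D ** (matrix_inv S ** J)) = 0"
proof
  assume "det (S - J ** D) = 0"
  then obtain y where "y \<noteq> 0" and ker: "(S - J ** D) *v y = 0"
    using det_eq_0_iff_nontrivial_kernel by blast
  have Sy: "S *v y = J *v (D *v y)"
    using ker by (simp add: matrix_vector_mult_diff_rdistrib matrix_vector_mul_assoc)
  then have "matrix_inv S *v (J *v (D *v y)) = y"
    by (metis matrix_vector_mul_assoc matrix_inv_left[OF assms] matrix_vector_mul_lid)
  then have "(mat 1 - D ** (matrix_inv S ** J)) *v (D *v y) = 0"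
    by (simp add: matrix_vector_mult_diff_rdistrib matrix_vector_mul_assoc[symmetric])
  moreover have "D *v y \<noteq> 0"
    using Sy \<open>y \<noteq> 0\<close> inj_matrix_vector_mult[OF assms]
    by (metis injD matrix_vector_mult_0_right)
  ultimately show "det (mat 1 - D ** (matrix_inv S ** J)) = 0"
    using det_eq_0_iff_nontrivial_kernel by blast
next
  assume "det (mat 1 - D ** (matrix_inv S ** J)) = 0"
  then obtain x where "x \<noteq> 0" and ker: "(mat 1 - D ** (matrix_inv S ** J)) *v x = 0"
    using det_eq_0_iff_nontrivial_kernel by blast
  define y where "y = matrix_inv S *v (J *v x)"
  have Dy: "D *v y = x"
    using ker by (simp add: y_def matrix_vector_mult_diff_rdistrib matrix_vector_mul_assoc)
  have "S *v y = J *v x"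
    by (simp add: y_def matrix_vector_mul_assoc matrix_mul_assoc matrix_inv_right[OF assms])
  then have "(S - J ** D) *v y = 0"
    by (simp add: matrix_vector_mult_diff_rdistrib matrix_vector_mul_assoc[symmetric] Dy)
  moreover have "y \<noteq> 0"
    using Dy \<open>x \<noteq> 0\<close> by auto
  ultimately show "det (S - J ** D) = 0"
    using det_eq_0_iff_nontrivial_kernel by blast
qed

definition vec_append :: "'a^'m \<Rightarrow> 'a^'n \<Rightarrow> 'a^('m + 'n)" where
  "vec_append x y = (\<chi> i. case i of Inl a \<Rightarrow> x $ a | Inr b \<Rightarrow> y $ b)"

lemma vec_append_split:
  "z = vec_append (\<chi> a. z $ Inl a) (\<chi> b. z $ Inr b)"
  by (simp add: vec_append_def vec_eq_iff split: sum.split)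

lemma sum_UNIV_Plus:
  "sum f (UNIV :: ('a::finite + 'b::finite) set) = (\<Sum>a\<in>UNIV. f (Inl a)) + (\<Sum>b\<in>UNIV. f (Inr b))"
  using sum.Plus[of "UNIV :: 'a set" "UNIV :: 'b set" f] by (simp add: UNIV_Plus_UNIV)

lemma norm_vec_append_squared:
  fixes x :: "'a::real_normed_vector^'m" and y :: "'a^'n"
  shows "(norm (vec_append x y))\<^sup>2 = (norm x)\<^sup>2 + (norm y)\<^sup>2"
  by (simp add: norm_vec_def L2_set_def sum_nonneg sum_UNIV_Plus vec_append_def)

lemma norm_vec_append_zero_right [simp]:
  fixes x :: "'a::real_normed_vector^'m"
  shows "norm (vec_append x (0 :: 'a^'n)) = norm x"
  using norm_vec_append_squared[of x "0 :: 'a^'n"] by (simp add: power2_eq_iff_nonneg)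

lemma norm_vec_append_zero_left [simp]:
  fixes y :: "'a::real_normed_vector^'n"
  shows "norm (vec_append (0 :: 'a^'m) y) = norm y"
  using norm_vec_append_squared[of "0 :: 'a^'m" y] by (simp add: power2_eq_iff_nonneg)

lemma norm_le_vec_append:
  fixes x :: "'a::real_normed_vector^'m" and y :: "'a^'n"
  shows "norm x \<le> norm (vec_append x y)" "norm y \<le> norm (vec_append x y)"
  by (simp_all add: power2_le_imp_le norm_vec_append_squared)

lemma blockdiag_mult_vec_append:
  "blockdiag D1 D2 *v vec_append x y = vec_append (D1 *v x) (D2 *v y)"
  by (simp add: blockdiag_def vec_append_def matrix_vector_mult_def vec_eq_iff sum_UNIV_Plus
      split: sum.split)

lemma norm_mult_le_specnorm: "norm (M *v x) \<le> specnorm M * norm x"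
  unfolding specnorm_def by (rule onorm) simp

lemma specnorm_nonneg: "0 \<le> specnorm M"
  unfolding specnorm_def by (rule onorm_pos_le) simp

lemma specnorm_le:
  assumes "\<And>x. norm (M *v x) \<le> c * norm x"
  shows "specnorm M \<le> c"
  unfolding specnorm_def using assms by (rule onorm_le)

lemma specnorm_blockdiag:
  fixes D1 :: "complex^'r^'r" and D2 :: "complex^'n^'r"
  shows "specnorm (blockdiag D1 D2) = max (specnorm D1) (specnorm D2)"
proof (rule antisym)
  let ?m = "max (specnorm D1) (specnorm D2)"
  show "specnorm (blockdiag D1 D2) \<le> ?m"
  proof (rule specnorm_le)
    fix z :: "complex^('r + 'n)"
    obtain x y where z: "z = vec_append x y"
      using vec_append_split by blast
    have "norm (D1 *v x) \<le> ?m * norm x" "norm (D2 *v y) \<le> ?m * norm y"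
      by (rule order_trans[OF norm_mult_le_specnorm], simp add: mult_right_mono)+
    then have "(norm (D1 *v x))\<^sup>2 + (norm (D2 *v y))\<^sup>2 \<le> (?m * norm x)\<^sup>2 + (?m * norm y)\<^sup>2"
      by (intro add_mono power_mono) simp_all
    then have "(norm (blockdiag D1 D2 *v z))\<^sup>2 \<le> (?m * norm z)\<^sup>2"
      by (simp add: z blockdiag_mult_vec_append norm_vec_append_squared power_mult_distrib
          distrib_left)
    then show "norm (blockdiag D1 D2 *v z) \<le> ?m * norm z"
      by (rule power2_le_imp_le) (simp add: specnorm_nonneg le_max_iff_disj)
  qed
next
  let ?s = "specnorm (blockdiag D1 D2)"
  have "specnorm D1 \<le> ?s"
  proof (rule specnorm_le)
    fix x :: "complex^'r"
    have "norm (D1 *v x) \<le> norm (blockdiag D1 D2 *v vec_append x 0)"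
      by (simp add: blockdiag_mult_vec_append norm_le_vec_append)
    also have "\<dots> \<le> ?s * norm x"
      using norm_mult_le_specnorm[of "blockdiag D1 D2" "vec_append x 0"] by simp
    finally show "norm (D1 *v x) \<le> ?s * norm x" .
  qed
  moreover have "specnorm D2 \<le> ?s"
  proof (rule specnorm_le)
    fix y :: "complex^'n"
    have "norm (D2 *v y) \<le> norm (blockdiag D1 D2 *v vec_append 0 y)"
      by (simp add: blockdiag_mult_vec_append norm_le_vec_append)
    also have "\<dots> \<le> ?s * norm y"
      using norm_mult_le_specnorm[of "blockdiag D1 D2" "vec_append 0 y"] by simp
    finally show "norm (D2 *v y) \<le> ?s * norm y" .
  qed
  ultimately show "max (specnorm D1) (specnorm D2) \<le> ?s"
    by simp
qed

lemma pertAB_eq_IIblock_mult_blockdiag: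
  "pertAB D1 D2 = (IIblock :: complex^('r::finite + 'r)^('r + 'n::finite)) ** blockdiag D1 D2"
  by (simp add: vec_eq_iff matrix_matrix_mult_def pertAB_def IIblock_def blockdiag_def
      sum_UNIV_Plus mult_if_delta split: sum.split)

lemma det_minus_pertAB_first_block_row:
  fixes S :: "complex^('r::finite + 'n::finite)^('r + 'n)"
  shows "det (S - pertAB (\<chi> a b. S $ Inl a $ Inl b) (\<chi> a b. S $ Inl a $ Inr b)) = 0"
proof (rule det_zero_row(1))
  show "row (Inl undefined) (S - pertAB (\<chi> a b. S $ Inl a $ Inl b) (\<chi> a b. S $ Inl a $ Inr b)) = 0"
    by (simp add: row_def vec_eq_iff pertAB_def split: sum.split)
qed

lemma det_minus_pertAB_eq_0_iff:
  fixes S :: "complex^('r::finite + 'n::finite)^('r + 'n)"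
  assumes "invertible S"
  shows "det (mat 1 - blockdiag D1 D2 ** (matrix_inv S ** IIblock)) = 0 \<longleftrightarrow>
    det (S - pertAB D1 D2) = 0"
  using det_minus_mult_eq_0_iff[OF assms, of IIblock "blockdiag D1 D2"]
  by (simp add: pertAB_eq_IIblock_mult_blockdiag)

lemma specnorms_singular_blockdiag_eq:
  fixes S :: "complex^('r::finite + 'n::finite)^('r + 'n)"
  assumes "invertible S"
  shows "{specnorm D | D. D \<in> {blockdiag D1 D2 | D1 D2. True} \<and>
      det (mat 1 - D ** (matrix_inv S ** IIblock)) = 0} =
    {max (specnorm DA) (specnorm DB) | DA DB. det (S - pertAB DA DB) = 0}"
    (is "?L = ?R")
proof (intro equalityI subsetI)
  fix t assume "t \<in> ?L"
  then show "t \<in> ?R"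
    by (auto simp: det_minus_pertAB_eq_0_iff[OF assms] specnorm_blockdiag) blast
next
  fix t assume "t \<in> ?R"
  then obtain DA DB where "t = specnorm (blockdiag DA DB)" "det (S - pertAB DA DB) = 0"
    by (auto simp: specnorm_blockdiag)
  then show "t \<in> ?L"
    using det_minus_pertAB_eq_0_iff[OF assms] by blast
qed

theorem theorem2p4:
  fixes A :: "complex^'r^'r" and B :: "complex^'n^'r" and C :: "complex^'r^'n"
    and d :: nat and Ak :: "nat \<Rightarrow> complex^'n^'n" and lam :: complex
  assumes "invertible (rosenbrock A B C d Ak lam)"
  shows "eta_AB A B C d Ak lam =
    inverse (mu_struct {blockdiag D1 D2 | D1 D2. True}
                       (matrix_inv (rosenbrock A B C d Ak lam) ** IIblock))"
proof -
  let ?S = "rosenbrock A B C d Ak lam"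
  let ?M = "matrix_inv ?S ** (IIblock :: complex^('r + 'r)^('r + 'n))"
  let ?SS = "{blockdiag D1 D2 | (D1 :: complex^'r^'r) (D2 :: complex^'n^'r). True}"
  have "{D \<in> ?SS. det (mat 1 - D ** ?M) = 0} \<noteq> {}"
    using det_minus_pertAB_first_block_row[of ?S] det_minus_pertAB_eq_0_iff[OF assms] by blast
  then have "mu_struct ?SS ?M = inverse (Inf {specnorm D | D. D \<in> ?SS \<and> det (mat 1 - D ** ?M) = 0})"
    unfolding mu_struct_def by (rule if_not_P)
  then show ?thesis
    unfolding eta_AB_def specnorms_singular_blockdiag_eq[OF assms] by simp
qed

end
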